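(* Let $G$ be a finite multigraph (no loops), let $\ell \geq 4$ be an integer, let $s$ be a vertex of $G$, and let $A \subsetneq V(G)$ with $s \notin A$ be such that $\lambda_G(x,y) \geq \ell$ for any two distinct $x,y\in A$ and such that no edge of $G$ has both endvertices outside $A$. If $\deg(s) = 4$, then $L(G,s,\tau_A)$ is one of: $K_4$, $K_{2,2}$, or the disjoint union of two edges. The last case can hold only if $\ell$ is odd.
   Context: $\lambda_G(x,y)$ is the maximum number of pairwise edge-disjoint $x$–$y$ paths in $G$. Lifting two distinct edges $sx,sy$ means deleting them and adding a new edge $xy$. The target function $\tau_A$ assigns $\ell$ to pairs of vertices both in $A$ and $0$ otherwise; a pair of edges at $s$ is $\tau_A$-admissible if after lifting them the new graph $G'$ satisfies $\lambda_{G'}(x,y)\ge\tau_A(x,y)$ for all distinct $x,y\in V(G)\setminus\{s\}$. The lifting graph $L(G,s,\tau_A)$ has as vertices the edges incident with $s$, two being adjacent iff they form a $\tau_A$-admissible pair. *)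

theory Defs
  imports Main
begin

text \<open>Parallel edges are distinct edge names with equal endpoints.\<close>

definition multigraph :: "'v set \<Rightarrow> 'e set \<Rightarrow> ('e \<Rightarrow> 'v set) \<Rightarrow> bool" where
  "multigraph V E ends \<longleftrightarrow> finite V \<and> finite E \<and>
     (\<forall>e\<in>E. ends e \<subseteq> V \<and> card (ends e) = 2)"

definition is_path :: "'v set \<Rightarrow> 'e set \<Rightarrow> ('e \<Rightarrow> 'v set) \<Rightarrow> 'v \<Rightarrow> 'v \<Rightarrow> 'v list \<Rightarrow> 'e list \<Rightarrow> bool" where
  "is_path V E ends x y vs es \<longleftrightarrow>
     vs \<noteq> [] \<and> hd vs = x \<and> last vs = y \<and> distinct vs \<and> set vs \<subseteq> V \<and>
     length es + 1 = length vs \<and> set es \<subseteq> E \<and>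
     (\<forall>i < length es. ends (es ! i) = {vs ! i, vs ! Suc i})"

definition has_disjoint_paths :: "'v set \<Rightarrow> 'e set \<Rightarrow> ('e \<Rightarrow> 'v set) \<Rightarrow> 'v \<Rightarrow> 'v \<Rightarrow> nat \<Rightarrow> bool" where
  "has_disjoint_paths V E ends x y k \<longleftrightarrow>
     (\<exists>P :: nat \<Rightarrow> 'v list \<times> 'e list.
        (\<forall>i<k. is_path V E ends x y (fst (P i)) (snd (P i))) \<and>
        (\<forall>i<k. \<forall>j<k. i \<noteq> j \<longrightarrow> set (snd (P i)) \<inter> set (snd (P j)) = {}))"

definition edge_conn :: "'v set \<Rightarrow> 'e set \<Rightarrow> ('e \<Rightarrow> 'v set) \<Rightarrow> 'v \<Rightarrow> 'v \<Rightarrow> nat" where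
  "edge_conn V E ends x y = Sup {k. has_disjoint_paths V E ends x y k}"

definition incident_edges :: "'e set \<Rightarrow> ('e \<Rightarrow> 'v set) \<Rightarrow> 'v \<Rightarrow> 'e set" where
  "incident_edges E ends s = {e\<in>E. s \<in> ends e}"

definition other_end :: "('e \<Rightarrow> 'v set) \<Rightarrow> 'v \<Rightarrow> 'e \<Rightarrow> 'v" where
  "other_end ends s e = (THE x. ends e = {s, x})"

text \<open>We reuse the name e1 for the new edge (so the result has edge set E - {e2}
  and e1 now has endpoints {x,y}); this is isomorphic to the graph described in the paper.
  If x = y the new edge is a loop, which does not affect any path.\<close>

definition lift_edges :: "'e set \<Rightarrow> ('e \<Rightarrow> 'v set) \<Rightarrow> 'v \<Rightarrow> 'e \<Rightarrow> 'e \<Rightarrow> 'e set \<times> ('e \<Rightarrow> 'v set)" where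
  "lift_edges E ends s e1 e2 =
     (E - {e2}, ends(e1 := {other_end ends s e1, other_end ends s e2}))"

definition tau :: "'v set \<Rightarrow> nat \<Rightarrow> 'v \<Rightarrow> 'v \<Rightarrow> nat" where
  "tau A l x y = (if x \<in> A \<and> y \<in> A then l else 0)"

definition admissible :: "'v set \<Rightarrow> 'e set \<Rightarrow> ('e \<Rightarrow> 'v set) \<Rightarrow> 'v \<Rightarrow> 'v set \<Rightarrow> nat \<Rightarrow> 'e \<Rightarrow> 'e \<Rightarrow> bool" where
  "admissible V E ends s A l e1 e2 \<longleftrightarrow>
     e1 \<in> incident_edges E ends s \<and> e2 \<in> incident_edges E ends s \<and> e1 \<noteq> e2 \<and>
     (let (E', ends') = lift_edges E ends s e1 e2 in
       \<forall>x\<in>V - {s}. \<forall>y\<in>V - {s}. x \<noteq> y \<longrightarrow> edge_conn V E' ends' x y \<ge> tau A l x y)"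

definition is_K4 :: "'a set \<Rightarrow> ('a \<Rightarrow> 'a \<Rightarrow> bool) \<Rightarrow> bool" where
  "is_K4 D R \<longleftrightarrow> card D = 4 \<and> (\<forall>a\<in>D. \<forall>b\<in>D. a \<noteq> b \<longrightarrow> R a b)"

definition is_K22 :: "'a set \<Rightarrow> ('a \<Rightarrow> 'a \<Rightarrow> bool) \<Rightarrow> bool" where
  "is_K22 D R \<longleftrightarrow> (\<exists>a b c d. distinct [a, b, c, d] \<and> D = {a, b, c, d} \<and>
     (\<forall>u\<in>D. \<forall>v\<in>D. u \<noteq> v \<longrightarrow>
        (R u v \<longleftrightarrow> \<not> ({u, v} = {a, b} \<or> {u, v} = {c, d}))))"

definition is_2K2 :: "'a set \<Rightarrow> ('a \<Rightarrow> 'a \<Rightarrow> bool) \<Rightarrow> bool" where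
  "is_2K2 D R \<longleftrightarrow> (\<exists>a b c d. distinct [a, b, c, d] \<and> D = {a, b, c, d} \<and>
     (\<forall>u\<in>D. \<forall>v\<in>D. u \<noteq> v \<longrightarrow>
        (R u v \<longleftrightarrow> ({u, v} = {a, b} \<or> {u, v} = {c, d}))))"

end

(* By the edge version of Menger's theorem, the connectivity hypothesis says that every
   vertex set S splitting A has d(S) >= l, where d(S) counts the edges leaving S.  Lifting
   the edges sx, sy lowers d(S) by 2 if x, y are in S (and s is not), and leaves it unchanged
   otherwise.  So the lifting is admissible iff no dangerous set, i.e. a set X avoiding s that
   splits A with d(X) <= l + 1, contains both x and y.  Since d(X + s) = d(X) + 4 - 2 |X cap N(s)|,
   a dangerous set contains the far ends of at most two of the four edges at s, and then its
   complement in V - s is dangerous too: non-admissible pairs come in complementary pairs.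
   Three dangerous sets through one edge at s violate the counting inequality for three
   sets, which leaves K4, K2,2 and 2K2.  Two dangerous sets X, Y through one edge force
   d(X) = l + 1 and d(X cap Y) = d(X - Y) = l by sub- and posimodularity, and then the parity
   identity d(X cap Y) + d(X - Y) = d(X) + 2 |E(X cap Y, X - Y)| shows that l is odd.
   Menger's theorem is proved by the classical induction on |V| + |E|: either an edge can be
   deleted, or a short x-y path can be split off, or some tight cut has two vertices on each
   side and the paths in the two contractions are glued along the cut edges. *)

theory Submission
  imports Defs
begin

text \<open>Loops must be allowed: lifting two edges with a common far end creates one.\<close>

definition pseudograph :: "'v set \<Rightarrow> 'e set \<Rightarrow> ('e \<Rightarrow> 'v set) \<Rightarrow> bool" where
  "pseudograph V E ends \<longleftrightarrow> finite V \<and> finite E \<and> (\<forall>e\<in>E. ends e \<subseteq> V \<and> card (ends e) \<le> 2)"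

lemma multigraph_imp_pseudograph: "multigraph V E ends \<Longrightarrow> pseudograph V E ends"
  unfolding multigraph_def pseudograph_def by simp

lemma finite_card_le_2_cases:
  assumes "finite T" "card T \<le> 2"
  obtains u v where "T = {u, v}" | "T = {}"
proof -
  consider "card T = 0" | "card T = 1" | "card T = 2" using assms(2) by linarith
  then show thesis
  proof cases
    case 1
    then show thesis using assms(1) that(2) by simp
  next
    case 2
    then obtain u where "T = {u, u}" by (auto simp: card_1_singleton_iff)
    then show thesis using that(1) by blast
  next
    case 3
    then show thesis using that(1) by (auto simp: card_2_iff)
  qed
qed

lemma card_le_2_eq_pair:
  assumes "finite T" "card T \<le> 2" "a \<in> T" "b \<in> T" "a \<noteq> b"
  shows "T = {a, b}"
  using assms by (cases rule: finite_card_le_2_cases) auto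

lemma pseudograph_ends:
  "pseudograph V E ends \<Longrightarrow> e \<in> E \<Longrightarrow> ends e \<subseteq> V \<and> finite (ends e) \<and> card (ends e) \<le> 2"
  unfolding pseudograph_def by (meson finite_subset)

lemma pseudograph_ends_cases:
  assumes "pseudograph V E ends" "e \<in> E"
  obtains u v where "ends e = {u, v}" | "ends e = {}"
proof -
  have "finite (ends e)" "card (ends e) \<le> 2"
    using pseudograph_ends[OF assms] by simp_all
  then show thesis using that by (cases rule: finite_card_le_2_cases) auto
qed

definition crosses :: "'v set \<Rightarrow> 'v set \<Rightarrow> bool" where
  "crosses S T \<longleftrightarrow> T \<inter> S \<noteq> {} \<and> T - S \<noteq> {}"

lemma crosses_pair [simp]: "crosses S {u, v} \<longleftrightarrow> (u \<in> S \<longleftrightarrow> v \<notin> S)"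
  unfolding crosses_def by auto

lemma not_crosses_empty [simp]: "\<not> crosses S {}"
  unfolding crosses_def by simp

definition cut_edges :: "'e set \<Rightarrow> ('e \<Rightarrow> 'v set) \<Rightarrow> 'v set \<Rightarrow> 'e set" where
  "cut_edges E ends S = {e\<in>E. crosses S (ends e)}"

definition edges_between :: "'e set \<Rightarrow> ('e \<Rightarrow> 'v set) \<Rightarrow> 'v set \<Rightarrow> 'v set \<Rightarrow> 'e set" where
  "edges_between E ends P Q = {e\<in>E. ends e \<inter> P \<noteq> {} \<and> ends e \<inter> Q \<noteq> {}}"

lemma finite_cut_edges: "finite E \<Longrightarrow> finite (cut_edges E ends S)"
  unfolding cut_edges_def by simp

lemma card_filter_sum: "finite E \<Longrightarrow> card {e\<in>E. P e} = (\<Sum>e\<in>E. of_bool (P e))"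
  by (simp add: Collect_conj_eq Int_commute)

lemma cut_edges_complement:
  "\<forall>e\<in>E. ends e \<subseteq> V \<Longrightarrow> cut_edges E ends (V - S) = cut_edges E ends S"
  unfolding cut_edges_def crosses_def by blast

lemma cut_edges_Int_vertices:
  "\<forall>e\<in>E. ends e \<subseteq> V \<Longrightarrow> cut_edges E ends (S \<inter> V) = cut_edges E ends S"
  unfolding cut_edges_def crosses_def by blast

lemma cut_edges_submodular:
  assumes "pseudograph V E ends"
  shows "card (cut_edges E ends (X \<inter> Y)) + card (cut_edges E ends (X \<union> Y))
    \<le> card (cut_edges E ends X) + card (cut_edges E ends Y)"
proof -
  have "(\<Sum>e\<in>E. of_bool (crosses (X \<inter> Y) (ends e)) + of_bool (crosses (X \<union> Y) (ends e)))
      \<le> (\<Sum>e\<in>E. of_bool (crosses X (ends e)) + (of_bool (crosses Y (ends e)) :: nat))"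
    (is "sum ?l E \<le> sum ?r E")
  proof (rule sum_mono)
    fix e assume "e \<in> E"
    from pseudograph_ends_cases[OF assms this] show "?l e \<le> ?r e"
    proof cases
      case (1 u v)
      then show ?thesis by (cases "u \<in> X"; cases "u \<in> Y"; cases "v \<in> X"; cases "v \<in> Y") auto
    qed simp
  qed
  then show ?thesis
    using assms unfolding cut_edges_def by (simp only: card_filter_sum pseudograph_def sum.distrib)
qed

lemma cut_edges_posimodular:
  assumes "pseudograph V E ends"
  shows "card (cut_edges E ends (X - Y)) + card (cut_edges E ends (Y - X))
      + 2 * card (edges_between E ends (X \<inter> Y) (- (X \<union> Y)))
    \<le> card (cut_edges E ends X) + card (cut_edges E ends Y)"
proof -
  have "(\<Sum>e\<in>E. of_bool (crosses (X - Y) (ends e)) + of_bool (crosses (Y - X) (ends e))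
      + 2 * of_bool (ends e \<inter> (X \<inter> Y) \<noteq> {} \<and> ends e \<inter> - (X \<union> Y) \<noteq> {}))
    \<le> (\<Sum>e\<in>E. of_bool (crosses X (ends e)) + (of_bool (crosses Y (ends e)) :: nat))"
    (is "sum ?l E \<le> sum ?r E")
  proof (rule sum_mono)
    fix e assume "e \<in> E"
    from pseudograph_ends_cases[OF assms this] show "?l e \<le> ?r e"
    proof cases
      case (1 u v)
      then show ?thesis by (cases "u \<in> X"; cases "u \<in> Y"; cases "v \<in> X"; cases "v \<in> Y") auto
    qed simp
  qed
  then show ?thesis
    using assms unfolding cut_edges_def edges_between_def
    by (simp only: card_filter_sum pseudograph_def sum_distrib_left
        sum.distrib)
qed

lemma cut_edges_three_sets:
  assumes "pseudograph V E ends"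
  shows "card (cut_edges E ends (X \<inter> Y \<inter> Z)) + card (cut_edges E ends (X - Y - Z))
      + card (cut_edges E ends (Y - X - Z)) + card (cut_edges E ends (Z - X - Y))
      + 2 * card (edges_between E ends (X \<inter> Y \<inter> Z) (- (X \<union> Y \<union> Z)))
    \<le> card (cut_edges E ends X) + card (cut_edges E ends Y) + card (cut_edges E ends Z)"
proof -
  have "(\<Sum>e\<in>E. of_bool (crosses (X \<inter> Y \<inter> Z) (ends e)) + of_bool (crosses (X - Y - Z) (ends e))
      + of_bool (crosses (Y - X - Z) (ends e)) + of_bool (crosses (Z - X - Y) (ends e))
      + 2 * of_bool (ends e \<inter> (X \<inter> Y \<inter> Z) \<noteq> {} \<and> ends e \<inter> - (X \<union> Y \<union> Z) \<noteq> {}))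
    \<le> (\<Sum>e\<in>E. of_bool (crosses X (ends e)) + of_bool (crosses Y (ends e))
        + (of_bool (crosses Z (ends e)) :: nat))"
    (is "sum ?l E \<le> sum ?r E")
  proof (rule sum_mono)
    fix e assume "e \<in> E"
    from pseudograph_ends_cases[OF assms this] show "?l e \<le> ?r e"
    proof cases
      case (1 u v)
      then show ?thesis by (cases "u \<in> X"; cases "u \<in> Y"; cases "u \<in> Z"; cases "v \<in> X"; cases "v \<in> Y"; cases "v \<in> Z") auto
    qed simp
  qed
  then show ?thesis
    using assms unfolding cut_edges_def edges_between_def
    by (simp only: card_filter_sum pseudograph_def sum_distrib_left
        sum.distrib)
qed

lemma cut_edges_disjoint_Un:
  assumes "pseudograph V E ends" "P \<inter> Q = {}"
  shows "card (cut_edges E ends P) + card (cut_edges E ends Q)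
    = card (cut_edges E ends (P \<union> Q)) + 2 * card (edges_between E ends P Q)"
proof -
  have "(\<Sum>e\<in>E. of_bool (crosses P (ends e)) + of_bool (crosses Q (ends e)))
    = (\<Sum>e\<in>E. of_bool (crosses (P \<union> Q) (ends e))
        + 2 * (of_bool (ends e \<inter> P \<noteq> {} \<and> ends e \<inter> Q \<noteq> {}) :: nat))"
    (is "sum ?l E = sum ?r E")
  proof (rule sum.cong)
    fix e assume "e \<in> E"
    from pseudograph_ends_cases[OF assms(1) this] show "?l e = ?r e"
    proof cases
      case (1 u v)
      then show ?thesis by (cases "u \<in> P"; cases "u \<in> Q"; cases "v \<in> P"; cases "v \<in> Q") (use assms(2) in auto)
    qed simp
  qed simp
  then show ?thesis
    using assms unfolding cut_edges_def edges_between_def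
    by (simp only: card_filter_sum pseudograph_def sum_distrib_left
        sum.distrib)
qed

lemma is_path_mono:
  "is_path V E ends x y vs es \<Longrightarrow> V \<subseteq> V' \<Longrightarrow> E \<subseteq> E' \<Longrightarrow> is_path V' E' ends x y vs es"
  unfolding is_path_def by blast

lemma is_path_endpoints: "is_path V E ends x y vs es \<Longrightarrow> x \<in> V \<and> y \<in> V"
  unfolding is_path_def by (metis hd_in_set last_in_set subsetD)

lemma is_path_singleton: "x \<in> V \<Longrightarrow> is_path V E ends x x [x] []"
  unfolding is_path_def by simp

lemma is_path_edge_ends:
  assumes "is_path V E ends x y vs es" "e \<in> set es"
  shows "ends e \<subseteq> V" "ends e \<noteq> {}"
proof -
  obtain i where i: "i < length es" "e = es ! i" using assms(2) by (metis in_set_conv_nth)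
  then have "ends e = {vs ! i, vs ! Suc i}" "Suc i < length vs"
    using assms(1) unfolding is_path_def by auto
  then show "ends e \<subseteq> V" "ends e \<noteq> {}"
    using assms(1) nth_mem unfolding is_path_def by fastforce+
qed

lemma is_path_rev:
  assumes "is_path V E ends x y vs es"
  shows "is_path V E ends y x (rev vs) (rev es)"
proof -
  have l: "length vs = Suc (length es)" using assms unfolding is_path_def by simp
  have "ends (rev es ! i) = {rev vs ! i, rev vs ! Suc i}" if "i < length es" for i
  proof -
    have "ends (es ! (length es - Suc i)) = {vs ! (length es - Suc i), vs ! Suc (length es - Suc i)}"
      using assms that unfolding is_path_def by simp
    then show ?thesis
      using that l by (simp add: rev_nth Suc_diff_Suc insert_commute)
  qed
  then show ?thesis
    using assms unfolding is_path_def by (auto simp: hd_rev last_rev)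
qed

lemma is_path_append:
  assumes p1: "is_path V E ends x u vs1 es1" and p2: "is_path V E ends v y vs2 es2"
    and disj: "set vs1 \<inter> set vs2 = {}" and e: "e \<in> E" "ends e = {u, v}"
  shows "is_path V E ends x y (vs1 @ vs2) (es1 @ e # es2)"
proof -
  have l1: "length vs1 = Suc (length es1)" and l2: "length vs2 = Suc (length es2)"
    using p1 p2 unfolding is_path_def by auto
  have u: "vs1 ! length es1 = u" and v: "vs2 ! 0 = v"
    using p1 p2 l1 unfolding is_path_def by (auto simp: last_conv_nth hd_conv_nth)
  have "ends ((es1 @ e # es2) ! i) = {(vs1 @ vs2) ! i, (vs1 @ vs2) ! Suc i}"
    if i: "i < length es1 + Suc (length es2)" for i
  proof -
    consider "i < length es1" | "i = length es1" | "length es1 < i" by linarith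
    then show ?thesis
    proof cases
      case 1
      then show ?thesis using p1 l1 unfolding is_path_def by (simp add: nth_append)
    next
      case 2
      then show ?thesis using e l1 u v by (simp add: nth_append)
    next
      case 3
      define j where "j = i - Suc (length es1)"
      have "i = Suc (length es1 + j)" "j < length es2" using 3 i unfolding j_def by auto
      then show ?thesis using p2 l1 unfolding is_path_def by (simp add: nth_append)
    qed
  qed
  moreover have "hd (vs1 @ vs2) = x" "last (vs1 @ vs2) = y"
    using p1 p2 unfolding is_path_def by simp_all
  moreover have "distinct (vs1 @ vs2)" "set (vs1 @ vs2) \<subseteq> V" "set (es1 @ e # es2) \<subseteq> E"
    using p1 p2 disj e unfolding is_path_def by auto
  moreover have "vs1 @ vs2 \<noteq> []" using l1 by auto
  ultimately show ?thesis
    using l1 l2 unfolding is_path_def by simp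
qed

lemma is_path_exit_edge:
  assumes p: "is_path V E ends x y vs es" and "x \<in> S" "y \<notin> S"
  obtains e where "e \<in> set es" "e \<in> cut_edges E ends S"
proof -
  define I where "I = {i. i < length vs \<and> vs ! i \<in> S}"
  define j where "j = Max I"
  have l: "length vs = Suc (length es)" using p unfolding is_path_def by simp
  have vs: "vs \<noteq> []" "vs ! 0 = x" "vs ! length es = y"
    using p l unfolding is_path_def by (auto simp: hd_conv_nth last_conv_nth)
  have "0 \<in> I" using vs \<open>x \<in> S\<close> unfolding I_def by simp
  moreover have "finite I" unfolding I_def by simp
  ultimately have "j \<in> I" and max: "\<And>i. i \<in> I \<Longrightarrow> i \<le> j"
    unfolding j_def using Max_in Max_ge by blast+
  then have j: "j < length es" "vs ! j \<in> S"
    using vs l \<open>y \<notin> S\<close> unfolding I_def by (auto simp: less_Suc_eq)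
  have "vs ! Suc j \<notin> S" using max[of "Suc j"] j l unfolding I_def by auto
  then have "es ! j \<in> cut_edges E ends S"
    using p j unfolding is_path_def cut_edges_def by auto
  then show thesis using that j(1) nth_mem by blast
qed

lemma has_disjoint_paths_le_cut:
  assumes "finite E" "has_disjoint_paths V E ends x y k" "x \<in> S" "y \<notin> S"
  shows "k \<le> card (cut_edges E ends S)"
proof -
  obtain P where paths: "\<forall>i<k. is_path V E ends x y (fst (P i)) (snd (P i))"
    and disj: "\<forall>i<k. \<forall>j<k. i \<noteq> j \<longrightarrow> set (snd (P i)) \<inter> set (snd (P j)) = {}"
    using assms(2) unfolding has_disjoint_paths_def by blast
  have "\<forall>i\<in>{..<k}. \<exists>e. e \<in> set (snd (P i)) \<inter> cut_edges E ends S"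
    using paths is_path_exit_edge[OF _ assms(3,4)] by (metis IntI lessThan_iff)
  then obtain f where f: "\<And>i. i < k \<Longrightarrow> f i \<in> set (snd (P i)) \<inter> cut_edges E ends S"
    by (metis lessThan_iff)
  have "inj_on f {..<k}"
    using f disj by (intro inj_onI) (metis IntD1 disjoint_iff lessThan_iff)
  moreover have "f ` {..<k} \<subseteq> cut_edges E ends S" using f by blast
  moreover have "finite (cut_edges E ends S)" using assms(1) by (rule finite_cut_edges)
  ultimately show ?thesis using card_inj_on_le[of f "{..<k}"] by simp
qed

lemma has_disjoint_paths_mono:
  assumes "has_disjoint_paths V E ends x y k" "E \<subseteq> E'"
  shows "has_disjoint_paths V E' ends x y k"
proof -
  obtain P where P: "\<forall>i<k. is_path V E ends x y (fst (P i)) (snd (P i))"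
    "\<forall>i<k. \<forall>j<k. i \<noteq> j \<longrightarrow> set (snd (P i)) \<inter> set (snd (P j)) = {}"
    using assms(1) unfolding has_disjoint_paths_def by blast
  have "is_path V E' ends x y (fst (P i)) (snd (P i))" if "i < k" for i
    by (rule is_path_mono[OF _ order_refl assms(2)]) (use P(1) that in simp)
  then show ?thesis
    unfolding has_disjoint_paths_def using P(2) by blast
qed

lemma has_disjoint_paths_Suc:
  assumes paths: "has_disjoint_paths V (E - set es) ends x y k" and p: "is_path V E ends x y vs es"
  shows "has_disjoint_paths V E ends x y (Suc k)"
proof -
  obtain P where P: "\<forall>i<k. is_path V (E - set es) ends x y (fst (P i)) (snd (P i))"
    "\<forall>i<k. \<forall>j<k. i \<noteq> j \<longrightarrow> set (snd (P i)) \<inter> set (snd (P j)) = {}"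
    using paths unfolding has_disjoint_paths_def by blast
  define Q where "Q = P(k := (vs, es))"
  have "is_path V E ends x y (fst (Q i)) (snd (Q i))" if "i < Suc k" for i
  proof (cases "i = k")
    case False
    then have "is_path V (E - set es) ends x y (fst (P i)) (snd (P i))"
      using P(1) that by simp
    then show ?thesis using False is_path_mono[OF _ order_refl Diff_subset] unfolding Q_def by simp
  qed (use p Q_def in simp)
  moreover have "set (snd (P i)) \<inter> set es = {}" if "i < k" for i
    using P(1) that unfolding is_path_def by blast
  then have "set (snd (Q i)) \<inter> set (snd (Q j)) = {}" if "i < Suc k" "j < Suc k" "i \<noteq> j" for i j
    using that P(2) unfolding Q_def by (cases "i = k"; cases "j = k") (auto simp: less_Suc_eq)
  ultimately show ?thesis
    unfolding has_disjoint_paths_def by blast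
qed

definition cuts_at_least :: "'e set \<Rightarrow> ('e \<Rightarrow> 'v set) \<Rightarrow> 'v \<Rightarrow> 'v \<Rightarrow> nat \<Rightarrow> bool" where
  "cuts_at_least E ends x y k \<longleftrightarrow> (\<forall>S. x \<in> S \<longrightarrow> y \<notin> S \<longrightarrow> k \<le> card (cut_edges E ends S))"

lemma cuts_at_least_Diff:
  assumes "finite E" "cuts_at_least E ends x y (Suc k)"
    and "\<And>S. x \<in> S \<Longrightarrow> y \<notin> S \<Longrightarrow> card (F \<inter> cut_edges E ends S) \<le> 1"
  shows "cuts_at_least (E - F) ends x y k"
  unfolding cuts_at_least_def
proof (intro allI impI)
  fix S assume S: "x \<in> S" "y \<notin> S"
  have "card (cut_edges E ends S)
      \<le> card (cut_edges (E - F) ends S \<union> (F \<inter> cut_edges E ends S))"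
    by (rule card_mono) (use assms(1) in \<open>auto simp: cut_edges_def\<close>)
  also have "\<dots> \<le> card (cut_edges (E - F) ends S) + 1"
    by (rule order_trans[OF card_Un_le]) (use assms(3)[OF S] in simp)
  finally show "k \<le> card (cut_edges (E - F) ends S)"
    using assms(2) S unfolding cuts_at_least_def by fastforce
qed

lemma tight_cut_through_edge:
  assumes "finite E" "cuts_at_least E ends x y k" "\<not> cuts_at_least (E - {e}) ends x y k"
  obtains S where "x \<in> S" "y \<notin> S" "card (cut_edges E ends S) = k" "e \<in> cut_edges E ends S"
proof -
  obtain S where S: "x \<in> S" "y \<notin> S" "\<not> k \<le> card (cut_edges (E - {e}) ends S)"
    using assms(3) unfolding cuts_at_least_def by blast
  have ge: "k \<le> card (cut_edges E ends S)"
    using assms(2) S unfolding cuts_at_least_def by blast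
  have eq: "cut_edges (E - {e}) ends S = cut_edges E ends S - {e}"
    unfolding cut_edges_def by auto
  have e: "e \<in> cut_edges E ends S"
  proof (rule ccontr)
    assume "e \<notin> cut_edges E ends S"
    then have "card (cut_edges (E - {e}) ends S) = card (cut_edges E ends S)"
      unfolding eq by simp
    then show False using S(3) ge by linarith
  qed
  have "card (cut_edges (E - {e}) ends S) = card (cut_edges E ends S) - 1"
    unfolding eq using e by (simp add: card_Diff_singleton)
  moreover have "card (cut_edges E ends S) > 0"
    using e finite_cut_edges[OF assms(1)] card_gt_0_iff by blast
  ultimately have "card (cut_edges E ends S) = k" using S(3) ge by linarith
  then show thesis using that S(1,2) e by blast
qed

definition collapse :: "'v set \<Rightarrow> 'v \<Rightarrow> 'v \<Rightarrow> 'v" where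
  "collapse S z w = (if w \<in> S then w else z)"

lemma pseudograph_collapse:
  assumes "pseudograph V E ends" "S \<subseteq> V"
  shows "pseudograph (insert z S) {e\<in>E. ends e \<inter> S \<noteq> {}} (\<lambda>e. collapse S z ` ends e)"
proof -
  have "card (collapse S z ` ends e) \<le> 2" if "e \<in> E" for e
    using assms(1) that card_image_le[of "ends e" "collapse S z"] finite_subset
    unfolding pseudograph_def by fastforce
  then show ?thesis
    using assms finite_subset unfolding pseudograph_def collapse_def by auto
qed

lemma cut_edges_collapse:
  "cut_edges {e\<in>E. ends e \<inter> S \<noteq> {}} (\<lambda>e. collapse S z ` ends e) T
    = cut_edges E ends (collapse S z -` T)"
proof -
  have "crosses T (collapse S z ` A) \<longleftrightarrow> crosses (collapse S z -` T) A" for A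
    unfolding crosses_def by blast
  moreover have "\<not> crosses (collapse S z -` T) A" if "A \<inter> S = {}" for A
    using that unfolding crosses_def collapse_def by (auto simp: disjoint_iff split: if_split_asm)
  ultimately show ?thesis unfolding cut_edges_def by blast
qed

lemma cuts_at_least_collapse:
  assumes "cuts_at_least E ends x y k" "collapse S z x = x" "collapse S z y = y"
  shows "cuts_at_least {e\<in>E. ends e \<inter> S \<noteq> {}} (\<lambda>e. collapse S z ` ends e) x y k"
  using assms unfolding cuts_at_least_def cut_edges_collapse by simp

lemma collapse_image_pair:
  assumes "finite T" "card T \<le> 2" "w \<in> S" "z \<notin> S" "collapse S z ` T = {w, z}"
  obtains v where "v \<notin> S" "T = {w, v}"
proof -
  obtain a where a: "a \<in> T" "collapse S z a = w" using assms(5) by (metis imageE insertI1)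
  obtain b where b: "b \<in> T" "collapse S z b = z" using assms(5) by (metis imageE insertI1 insertI2)
  have "a = w" "b \<notin> S" using a b assms(3,4) unfolding collapse_def by (auto split: if_splits)
  then show thesis
    using that card_le_2_eq_pair[OF assms(1,2)] a b assms(3) by blast
qed

lemma is_path_butlast:
  assumes p: "is_path V E ends x y vs es" and "es \<noteq> []"
  shows "is_path V E ends x (last (butlast vs)) (butlast vs) (butlast es)"
    "last es \<in> E" "ends (last es) = {last (butlast vs), y}"
proof -
  obtain n where n: "length es = Suc n" using assms(2) by (cases es) auto
  have l: "length vs = Suc (Suc n)" using p n unfolding is_path_def by simp
  then have lb: "length (butlast vs) = Suc n" by simp
  then have bl: "butlast vs \<noteq> []" using length_greater_0_conv[of "butlast vs"] by simp
  have "vs \<noteq> []" "last vs = y" using p unfolding is_path_def by simp_all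
  then have lasts: "last (butlast vs) = vs ! n" "last es = es ! n" "y = vs ! Suc n"
    using bl lb l n assms(2) by (simp_all add: last_conv_nth nth_butlast)
  have "hd (butlast vs) = hd vs"
    using bl lb \<open>vs \<noteq> []\<close> by (simp add: hd_conv_nth nth_butlast)
  then have "hd (butlast vs) = x" using p unfolding is_path_def by simp
  moreover have "set (butlast vs) \<subseteq> V" "set (butlast es) \<subseteq> E"
    using p unfolding is_path_def by (meson in_set_butlastD subset_iff)+
  ultimately show "is_path V E ends x (last (butlast vs)) (butlast vs) (butlast es)"
    using p bl lb n unfolding is_path_def by (simp add: distinct_butlast nth_butlast)
  show "last es \<in> E" "ends (last es) = {last (butlast vs), y}"
    using p assms(2) lasts n unfolding is_path_def by auto
qed

lemma is_path_uncollapse: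
  assumes p: "is_path V' E' (\<lambda>e. collapse S z ` ends e) u w vs es"
    and "set vs \<subseteq> S" "z \<notin> S" "E' \<subseteq> E"
  shows "is_path S E ends u w vs es"
proof -
  have "ends (es ! i) = {vs ! i, vs ! Suc i}" if "i < length es" for i
  proof -
    have "collapse S z ` ends (es ! i) = {vs ! i, vs ! Suc i}"
      using p that unfolding is_path_def by simp
    moreover have "{vs ! i, vs ! Suc i} \<subseteq> S"
      using p that assms(2) nth_mem unfolding is_path_def by fastforce
    ultimately have "ends (es ! i) \<subseteq> S"
      using \<open>z \<notin> S\<close> unfolding collapse_def by (auto split: if_splits)
    then have "collapse S z ` ends (es ! i) = ends (es ! i)"
      unfolding collapse_def by (auto simp: subset_iff image_iff)
    with \<open>collapse S z ` ends (es ! i) = {vs ! i, vs ! Suc i}\<close> show ?thesis by simp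
  qed
  then show ?thesis using p assms(2,4) unfolding is_path_def by auto
qed

lemma is_path_to_collapsed:
  assumes p: "is_path (insert z S) {e\<in>E. ends e \<inter> S \<noteq> {}} (\<lambda>e. collapse S z ` ends e) u z vs es"
    and "u \<in> S" "z \<notin> S" and G: "pseudograph V E ends"
  shows "es \<noteq> []" "is_path S E ends u (last (butlast vs)) (butlast vs) (butlast es)"
    "last es \<in> cut_edges E ends S" "\<exists>v. v \<notin> S \<and> ends (last es) = {last (butlast vs), v}"
proof -
  show ne: "es \<noteq> []"
  proof
    assume "es = []"
    then have "length vs = 1" "vs \<noteq> []" using p unfolding is_path_def by simp_all
    then have "hd vs = last vs" by (simp add: hd_conv_nth last_conv_nth)
    then show False using p \<open>u \<in> S\<close> \<open>z \<notin> S\<close> unfolding is_path_def by auto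
  qed
  note B = is_path_butlast[OF p ne]
  have dec: "butlast vs @ [z] = vs"
    using p append_butlast_last_id[of vs] unfolding is_path_def by simp
  have "distinct (butlast vs @ [z])" "set (butlast vs @ [z]) \<subseteq> insert z S"
    unfolding dec using p unfolding is_path_def by simp_all
  then have "set (butlast vs) \<subseteq> S" by auto
  then show path: "is_path S E ends u (last (butlast vs)) (butlast vs) (butlast es)"
    by (rule is_path_uncollapse[OF B(1) _ \<open>z \<notin> S\<close>]) simp
  have "last (butlast vs) \<in> S" using is_path_endpoints[OF path] by simp
  moreover have "last es \<in> E" using B(2) by simp
  then have "finite (ends (last es))" "card (ends (last es)) \<le> 2"
    using pseudograph_ends[OF G] by auto
  ultimately obtain v where "v \<notin> S" "ends (last es) = {last (butlast vs), v}"
    using collapse_image_pair[OF _ _ _ \<open>z \<notin> S\<close> B(3)] by blast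
  then show "\<exists>v. v \<notin> S \<and> ends (last es) = {last (butlast vs), v}"
    "last es \<in> cut_edges E ends S"
    using \<open>last (butlast vs) \<in> S\<close> B(2) unfolding cut_edges_def by auto
qed

lemma is_path_from_collapsed:
  assumes p: "is_path (insert z S) {e\<in>E. ends e \<inter> S \<noteq> {}} (\<lambda>e. collapse S z ` ends e) z u vs es"
    and "u \<in> S" "z \<notin> S" and G: "pseudograph V E ends"
  shows "es \<noteq> []" "is_path S E ends (hd (tl vs)) u (tl vs) (tl es)"
    "hd es \<in> cut_edges E ends S" "\<exists>v. v \<notin> S \<and> ends (hd es) = {v, hd (tl vs)}"
proof -
  note D = is_path_to_collapsed[OF is_path_rev[OF p] assms(2-4)]
  show "es \<noteq> []" using D(1) by simp
  have "tl vs \<noteq> []" using D(1) p unfolding is_path_def by (cases vs) auto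
  then have "last (butlast (rev vs)) = hd (tl vs)"
    by (simp add: butlast_rev last_rev)
  then show "is_path S E ends (hd (tl vs)) u (tl vs) (tl es)"
    "hd es \<in> cut_edges E ends S" "\<exists>v. v \<notin> S \<and> ends (hd es) = {v, hd (tl vs)}"
    using D(2-4) is_path_rev[OF D(2)] D(1) by (auto simp: butlast_rev last_rev insert_commute)
qed

lemma inj_on_lessThan_matching:
  assumes "inj_on f {..<k}" "inj_on g {..<k}" "f ` {..<k} \<subseteq> C" "g ` {..<k} \<subseteq> C"
    and "finite C" "card C \<le> k"
  obtains \<sigma> where "\<And>i. i < k \<Longrightarrow> \<sigma> i < k \<and> g (\<sigma> i) = f i" "inj_on \<sigma> {..<k}"
proof -
  have "card (g ` {..<k}) = card C"
    using card_image[OF assms(2)] card_mono[OF assms(5,4)] assms(6) by simp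
  then have onto: "g ` {..<k} = C" using card_subset_eq[OF assms(5,4)] by blast
  define \<sigma> where "\<sigma> i = inv_into {..<k} g (f i)" for i
  have \<sigma>: "\<sigma> i < k \<and> g (\<sigma> i) = f i" if "i < k" for i
    using that assms(3) onto unfolding \<sigma>_def
    by (metis f_inv_into_f image_subset_iff inv_into_into lessThan_iff)
  moreover have "inj_on \<sigma> {..<k}"
    using \<sigma> assms(1) by (metis inj_on_def lessThan_iff)
  ultimately show thesis using that by blast
qed

lemma is_path_glue:
  assumes G: "pseudograph V E ends" and S: "S \<subseteq> V" "x \<in> S" "y \<in> V - S"
    and p1: "is_path (insert y S) {e\<in>E. ends e \<inter> S \<noteq> {}} (\<lambda>e. collapse S y ` ends e) x y vs1 es1"
    and p2: "is_path (insert x (V - S)) {e\<in>E. ends e \<inter> (V - S) \<noteq> {}}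
      (\<lambda>e. collapse (V - S) x ` ends e) x y vs2 es2"
    and c: "last es1 = hd es2"
  shows "is_path V E ends x y (butlast vs1 @ tl vs2) (butlast es1 @ last es1 # tl es2)"
proof -
  have "y \<notin> S" "x \<notin> V - S" using S by auto
  note D1 = is_path_to_collapsed[OF p1 S(2) \<open>y \<notin> S\<close> G]
    and D2 = is_path_from_collapsed[OF p2 S(3) \<open>x \<notin> V - S\<close> G]
  let ?a = "last (butlast vs1)" and ?b = "hd (tl vs2)"
  have a: "?a \<in> S" and b: "?b \<in> V - S"
    using is_path_endpoints[OF D1(2)] is_path_endpoints[OF D2(2)] S by auto
  obtain v1 where v1: "v1 \<notin> S" "ends (last es1) = {?a, v1}" using D1(4) by auto
  obtain v2 where v2: "v2 \<notin> V - S" "ends (hd es2) = {v2, ?b}" using D2(4) by auto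
  have e: "last es1 \<in> E" using D1(3) unfolding cut_edges_def by simp
  then have "ends (hd es2) \<subseteq> V" using pseudograph_ends[OF G] c by simp
  then have "v2 \<in> V" using v2(2) by blast
  then have "ends (last es1) = {?a, ?b}"
    using v1 v2 a b c by (auto simp: doubleton_eq_iff)
  moreover have "set (butlast vs1) \<inter> set (tl vs2) = {}"
    using D1(2) D2(2) unfolding is_path_def by blast
  ultimately show ?thesis
    using is_path_append[OF is_path_mono[OF D1(2) S(1) order_refl]
        is_path_mono[OF D2(2) Diff_subset order_refl] _ e] by simp
qed

lemma edge_lists_across_cut_disjoint:
  assumes "\<forall>e\<in>set A1 \<union> set A2. ends e \<subseteq> S \<and> ends e \<noteq> {}"
    and "\<forall>e\<in>set B1 \<union> set B2. ends e \<subseteq> - S \<and> ends e \<noteq> {}"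
    and "crosses S (ends c1)" "crosses S (ends c2)" "c1 \<noteq> c2"
    and "set A1 \<inter> set A2 = {}" "set B1 \<inter> set B2 = {}"
  shows "set (A1 @ c1 # B1) \<inter> set (A2 @ c2 # B2) = {}"
  using assms unfolding crosses_def by fastforce

lemma has_disjoint_paths_glue:
  assumes G: "pseudograph V E ends" and S: "S \<subseteq> V" "x \<in> S" "y \<in> V - S"
    and tight: "card (cut_edges E ends S) \<le> k"
    and H1: "has_disjoint_paths (insert y S) {e\<in>E. ends e \<inter> S \<noteq> {}} (\<lambda>e. collapse S y ` ends e) x y k"
    and H2: "has_disjoint_paths (insert x (V - S)) {e\<in>E. ends e \<inter> (V - S) \<noteq> {}}
      (\<lambda>e. collapse (V - S) x ` ends e) x y k"
  shows "has_disjoint_paths V E ends x y k"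
proof -
  obtain P1 where p1: "\<And>i. i < k \<Longrightarrow> is_path (insert y S) {e\<in>E. ends e \<inter> S \<noteq> {}}
      (\<lambda>e. collapse S y ` ends e) x y (fst (P1 i)) (snd (P1 i))"
    and d1: "\<And>i j. i < k \<Longrightarrow> j < k \<Longrightarrow> i \<noteq> j \<Longrightarrow> set (snd (P1 i)) \<inter> set (snd (P1 j)) = {}"
    using H1 unfolding has_disjoint_paths_def by blast
  obtain P2 where p2: "\<And>i. i < k \<Longrightarrow> is_path (insert x (V - S)) {e\<in>E. ends e \<inter> (V - S) \<noteq> {}}
      (\<lambda>e. collapse (V - S) x ` ends e) x y (fst (P2 i)) (snd (P2 i))"
    and d2: "\<And>i j. i < k \<Longrightarrow> j < k \<Longrightarrow> i \<noteq> j \<Longrightarrow> set (snd (P2 i)) \<inter> set (snd (P2 j)) = {}"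
    using H2 unfolding has_disjoint_paths_def by blast
  have "y \<notin> S" "x \<notin> V - S" using S by auto
  note D1 = is_path_to_collapsed[OF p1 S(2) \<open>y \<notin> S\<close> G]
    and D2 = is_path_from_collapsed[OF p2 S(3) \<open>x \<notin> V - S\<close> G]
  define g1 where "g1 i = last (snd (P1 i))" for i
  define g2 where "g2 i = hd (snd (P2 i))" for i
  have "\<forall>e\<in>E. ends e \<subseteq> V" using G unfolding pseudograph_def by simp
  then have "cut_edges E ends (V - S) = cut_edges E ends S" by (rule cut_edges_complement)
  then have cut1: "g1 i \<in> cut_edges E ends S" and cut2: "g2 i \<in> cut_edges E ends S"
    if "i < k" for i
    using D1(3)[OF that] D2(3)[OF that] unfolding g1_def g2_def by simp_all
  have inj1: "inj_on g1 {..<k}"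
    using D1(1) d1 unfolding g1_def by (intro inj_onI) (metis disjoint_iff last_in_set lessThan_iff)
  moreover have "inj_on g2 {..<k}"
    using D2(1) d2 unfolding g2_def by (intro inj_onI) (metis disjoint_iff hd_in_set lessThan_iff)
  moreover have "finite (cut_edges E ends S)" using G finite_cut_edges unfolding pseudograph_def by blast
  ultimately obtain \<sigma> where \<sigma>: "\<And>i. i < k \<Longrightarrow> \<sigma> i < k \<and> g2 (\<sigma> i) = g1 i" "inj_on \<sigma> {..<k}"
    using inj_on_lessThan_matching[of g1 k g2 "cut_edges E ends S"] cut1 cut2 tight by blast
  define Q where "Q i = (butlast (fst (P1 i)) @ tl (fst (P2 (\<sigma> i))),
      butlast (snd (P1 i)) @ g1 i # tl (snd (P2 (\<sigma> i))))" for i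
  have "is_path V E ends x y (fst (Q i)) (snd (Q i))" if i: "i < k" for i
    using is_path_glue[OF G S p1[OF i] p2[of "\<sigma> i"]] \<sigma>(1)[OF i]
    unfolding Q_def g1_def g2_def by simp
  moreover have "set (snd (Q i)) \<inter> set (snd (Q j)) = {}" if ij: "i < k" "j < k" "i \<noteq> j" for i j
    unfolding Q_def snd_conv
  proof (rule edge_lists_across_cut_disjoint)
    have "\<sigma> i < k" "\<sigma> j < k" "\<sigma> i \<noteq> \<sigma> j" using \<sigma> ij by (auto dest: inj_onD)
    then show "set (tl (snd (P2 (\<sigma> i)))) \<inter> set (tl (snd (P2 (\<sigma> j)))) = {}"
      using d2[of "\<sigma> i" "\<sigma> j"] list.set_sel(2)[of "snd (P2 (\<sigma> i))"]
        list.set_sel(2)[of "snd (P2 (\<sigma> j))"] by fastforce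
    show "\<forall>e\<in>set (tl (snd (P2 (\<sigma> i)))) \<union> set (tl (snd (P2 (\<sigma> j)))). ends e \<subseteq> - S \<and> ends e \<noteq> {}"
      using is_path_edge_ends[OF D2(2)] \<open>\<sigma> i < k\<close> \<open>\<sigma> j < k\<close> by blast
    show "set (butlast (snd (P1 i))) \<inter> set (butlast (snd (P1 j))) = {}"
      using d1[OF ij] by (auto dest: in_set_butlastD)
    show "\<forall>e\<in>set (butlast (snd (P1 i))) \<union> set (butlast (snd (P1 j))). ends e \<subseteq> S \<and> ends e \<noteq> {}"
      using is_path_edge_ends[OF D1(2)] ij by blast
    show "g1 i \<noteq> g1 j" using inj1 ij by (auto dest: inj_onD)
    show "crosses S (ends (g1 i))" "crosses S (ends (g1 j))"
      using cut1 ij unfolding cut_edges_def by auto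
  qed
  ultimately show ?thesis unfolding has_disjoint_paths_def by blast
qed

lemma card_collapse_less:
  assumes "finite V" "finite E" "S \<subseteq> V" "2 \<le> card (V - S)"
  shows "card (insert z S) + card {e\<in>E. ends e \<inter> S \<noteq> {}} < card V + card E"
proof -
  have "card (insert z S) \<le> Suc (card S)" by (simp add: card_insert_le_m1)
  moreover have "card V = card S + card (V - S)"
    using assms(1,3) by (metis card_Diff_subset card_mono finite_subset le_add_diff_inverse)
  moreover have "card {e\<in>E. ends e \<inter> S \<noteq> {}} \<le> card E" using assms(2) by (simp add: card_mono)
  ultimately show ?thesis using assms(4) by linarith
qed

lemma common_neighbour:
  assumes G: "pseudograph V E ends" and "x \<noteq> y" "cuts_at_least E ends x y (Suc k)"
    and touch: "\<forall>e\<in>E. x \<in> ends e \<or> y \<in> ends e" and no_xy: "\<forall>e\<in>E. ends e \<noteq> {x, y}"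
  obtains a e1 e2 where "e1 \<in> E" "e2 \<in> E" "ends e1 = {x, a}" "ends e2 = {a, y}" "a \<noteq> x" "a \<noteq> y"
proof -
  define N where "N = insert x {v. \<exists>e\<in>E. ends e = {x, v}}"
  have "x \<in> N" "y \<notin> N" using no_xy \<open>x \<noteq> y\<close> unfolding N_def by auto
  then have "Suc k \<le> card (cut_edges E ends N)"
    using assms(3) unfolding cuts_at_least_def by blast
  then have "cut_edges E ends N \<noteq> {}" by auto
  then obtain e2 a b where e2: "e2 \<in> E" and ab: "a \<in> ends e2" "a \<in> N" "b \<in> ends e2" "b \<notin> N"
    unfolding cut_edges_def crosses_def by blast
  have fin: "finite (ends e2)" "card (ends e2) \<le> 2" using pseudograph_ends[OF G e2] by auto
  have "y \<in> ends e2"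
  proof (rule ccontr)
    assume "y \<notin> ends e2"
    then have "x \<in> ends e2" using touch e2 by blast
    moreover have "b \<noteq> x" using ab(4) unfolding N_def by blast
    ultimately have "ends e2 = {x, b}" using card_le_2_eq_pair[OF fin] ab(3) by blast
    then show False using ab(4) e2 unfolding N_def by blast
  qed
  moreover have "a \<noteq> y" using ab(2) \<open>y \<notin> N\<close> by blast
  ultimately have e2_ends: "ends e2 = {a, y}" using card_le_2_eq_pair[OF fin ab(1)] by blast
  then have "a \<noteq> x" using no_xy e2 by auto
  then obtain e1 where "e1 \<in> E" "ends e1 = {x, a}" using ab(2) unfolding N_def by blast
  from that[OF this(1) e2 this(2) e2_ends \<open>a \<noteq> x\<close> \<open>a \<noteq> y\<close>] show thesis .
qed

lemma path_meeting_each_cut_once: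
  assumes G: "pseudograph V E ends" and xy: "x \<in> V" "y \<in> V" "x \<noteq> y"
    and cuts: "cuts_at_least E ends x y (Suc k)" and touch: "\<forall>e\<in>E. x \<in> ends e \<or> y \<in> ends e"
  obtains vs es where "is_path V E ends x y vs es" "es \<noteq> []"
    "\<And>S. x \<in> S \<Longrightarrow> y \<notin> S \<Longrightarrow> card (set es \<inter> cut_edges E ends S) \<le> 1"
proof (cases "\<exists>e\<in>E. ends e = {x, y}")
  case True
  then obtain e where e: "e \<in> E" "ends e = {x, y}" by blast
  have "is_path V E ends x y ([x] @ [y]) ([] @ [e])"
    by (rule is_path_append[OF is_path_singleton is_path_singleton]) (use xy e in auto)
  moreover have "card (set [e] \<inter> cut_edges E ends S) \<le> 1" for S
    using card_mono[of "{e}" "{e} \<inter> cut_edges E ends S"] by simp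
  ultimately show thesis using that[of "[x, y]" "[e]"] by simp
next
  case False
  then have "\<forall>e\<in>E. ends e \<noteq> {x, y}" by blast
  then obtain a e1 e2 where a: "e1 \<in> E" "e2 \<in> E" "ends e1 = {x, a}" "ends e2 = {a, y}" "a \<noteq> x" "a \<noteq> y"
    by (rule common_neighbour[OF G xy(3) cuts touch])
  have "a \<in> V" using pseudograph_ends[OF G a(1)] a(3) by blast
  then have "is_path V E ends a y ([a] @ [y]) ([] @ [e2])"
    by (rule is_path_append[OF is_path_singleton is_path_singleton]) (use xy a in auto)
  then have "is_path V E ends x y ([x] @ [a, y]) ([] @ e1 # [e2])"
    by (intro is_path_append[OF is_path_singleton]) (use xy a in auto)
  moreover have "card (set [e1, e2] \<inter> cut_edges E ends S) \<le> 1" if "x \<in> S" "y \<notin> S" for S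
  proof -
    have "{e1, e2} \<inter> cut_edges E ends S \<subseteq> (if a \<in> S then {e2} else {e1})"
      using that a unfolding cut_edges_def by auto
    from card_mono[OF _ this] show ?thesis by (cases "a \<in> S") auto
  qed
  ultimately show thesis using that[of "[x, a, y]" "[e1, e2]"] by simp
qed

lemma has_disjoint_paths_split_at_tight_cut:
  fixes E :: "'e set"
  assumes G: "pseudograph V E ends" and xy: "x \<in> V" "y \<in> V" "x \<noteq> y"
    and cuts: "cuts_at_least E ends x y k"
    and S: "x \<in> S" "y \<notin> S" "card (cut_edges E ends S) = k"
    and e: "e \<in> cut_edges E ends S" "x \<notin> ends e" "y \<notin> ends e"
    and IH: "\<And>V' (E' :: 'e set) ends'. card V' + card E' < card V + card E \<Longrightarrow> pseudograph V' E' ends' \<Longrightarrow>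
      x \<in> V' \<Longrightarrow> y \<in> V' \<Longrightarrow> x \<noteq> y \<Longrightarrow> cuts_at_least E' ends' x y k \<Longrightarrow>
      has_disjoint_paths V' E' ends' x y k"
  shows "has_disjoint_paths V E ends x y k"
proof -
  have fin: "finite V" "finite E" and sub: "\<forall>e\<in>E. ends e \<subseteq> V"
    using G unfolding pseudograph_def by auto
  define T where "T = S \<inter> V"
  have T: "T \<subseteq> V" "x \<in> T" "y \<in> V - T" "card (cut_edges E ends T) = k"
    using S xy cut_edges_Int_vertices[OF sub] unfolding T_def by auto
  obtain u v where uv: "u \<in> ends e" "u \<in> T" "v \<in> ends e" "v \<in> V - T"
    using e(1) sub unfolding cut_edges_def crosses_def T_def by blast
  \<comment> \<open>the ends of \<open>e\<close> make both sides of the cut big enough for the contractions to shrink\<close>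
  have "x \<noteq> u" "y \<noteq> v" using uv e by auto
  then have "2 \<le> card {x, u}" "2 \<le> card {y, v}" by simp_all
  moreover have "finite T" using T(1) fin(1) finite_subset by blast
  ultimately have big: "2 \<le> card T" "2 \<le> card (V - T)"
    using card_mono[of T "{x, u}"] card_mono[of "V - T" "{y, v}"] T uv fin by auto
  then have big': "2 \<le> card (V - (V - T))" using T(1) by (simp add: double_diff)
  have cuts1: "cuts_at_least {e\<in>E. ends e \<inter> T \<noteq> {}} (\<lambda>e. collapse T y ` ends e) x y k"
    and cuts2: "cuts_at_least {e\<in>E. ends e \<inter> (V - T) \<noteq> {}} (\<lambda>e. collapse (V - T) x ` ends e) x y k"
    by (rule cuts_at_least_collapse[OF cuts]; use T in \<open>simp add: collapse_def\<close>)+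
  have "has_disjoint_paths (insert y T) {e\<in>E. ends e \<inter> T \<noteq> {}}
      (\<lambda>e. collapse T y ` ends e) x y k"
    by (rule IH[OF card_collapse_less[OF fin T(1) big(2)]
        pseudograph_collapse[OF G T(1)] _ _ xy(3) cuts1])
      (use T in auto)
  moreover have "has_disjoint_paths (insert x (V - T)) {e\<in>E. ends e \<inter> (V - T) \<noteq> {}}
      (\<lambda>e. collapse (V - T) x ` ends e) x y k"
    by (rule IH[OF card_collapse_less[OF fin Diff_subset big']
        pseudograph_collapse[OF G Diff_subset]
          _ _ xy(3) cuts2])
      (use T in auto)
  ultimately show ?thesis using has_disjoint_paths_glue[OF G T(1-3)] T(4) by simp
qed

theorem menger_edge:
  assumes "pseudograph V E ends" "x \<in> V" "y \<in> V" "x \<noteq> y" "cuts_at_least E ends x y k"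
  shows "has_disjoint_paths V E ends x y k"
  using assms
proof (induction "card V + card E" arbitrary: V E ends k rule: less_induct)
  case less
  note G = less.prems(1) and xy = less.prems(2-4) and cuts = less.prems(5)
  have fin: "finite E" using G unfolding pseudograph_def by simp
  have smaller: "has_disjoint_paths V E' ends x y j" if "E' \<subset> E" "cuts_at_least E' ends x y j" for E' j
  proof (rule less.hyps[OF _ _ xy that(2)])
    show "card V + card E' < card V + card E" using psubset_card_mono[OF fin that(1)] by simp
    show "pseudograph V E' ends"
      using G that(1) finite_subset[of E' E] unfolding pseudograph_def by auto
  qed
  show ?case
  proof (cases k)
    case 0
    then show ?thesis unfolding has_disjoint_paths_def by simp
  next
    case (Suc k')
    consider (redundant) e where "e \<in> E" "cuts_at_least (E - {e}) ends x y k"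
      | (far) e where "e \<in> E" "x \<notin> ends e" "y \<notin> ends e" "\<not> cuts_at_least (E - {e}) ends x y k"
      | (touching) "\<forall>e\<in>E. x \<in> ends e \<or> y \<in> ends e"
      by auto
    then show ?thesis
    proof cases
      case redundant
      then have "has_disjoint_paths V (E - {e}) ends x y k" by (intro smaller) auto
      then show ?thesis by (rule has_disjoint_paths_mono) auto
    next
      case far
      obtain S where S: "x \<in> S" "y \<notin> S" "card (cut_edges E ends S) = k" "e \<in> cut_edges E ends S"
        using tight_cut_through_edge[OF fin cuts far(4)] by blast
      show ?thesis
        by (rule has_disjoint_paths_split_at_tight_cut[OF G xy cuts S far(2,3) less.hyps])
    next
      case touching
      obtain vs es where p: "is_path V E ends x y vs es" "es \<noteq> []"
        and once: "\<And>S. x \<in> S \<Longrightarrow> y \<notin> S \<Longrightarrow> card (set es \<inter> cut_edges E ends S) \<le> 1"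
        using path_meeting_each_cut_once[OF G xy cuts[unfolded Suc] touching] by metis
      have "cuts_at_least (E - set es) ends x y k'"
        using cuts_at_least_Diff[OF fin, of ends x y k' "set es"] cuts once Suc by simp
      moreover have "E - set es \<subset> E" using p unfolding is_path_def by (cases es) auto
      ultimately have "has_disjoint_paths V (E - set es) ends x y k'" by (intro smaller)
      then show ?thesis unfolding Suc using p(1) by (rule has_disjoint_paths_Suc)
    qed
  qed
qed

lemma edge_conn_ge_iff:
  assumes G: "pseudograph V E ends" and xy: "x \<in> V" "y \<in> V" "x \<noteq> y"
  shows "k \<le> edge_conn V E ends x y \<longleftrightarrow> cuts_at_least E ends x y k"
proof -
  let ?K = "{j. has_disjoint_paths V E ends x y j}"
  have fin: "finite E" using G unfolding pseudograph_def by simp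
  have "j \<le> card (cut_edges E ends {x})" if "j \<in> ?K" for j
    using has_disjoint_paths_le_cut[OF fin, of V ends x y j "{x}"] that xy(3) by simp
  then have finK: "finite ?K" by (meson finite_nat_set_iff_bounded_le)
  moreover have "?K \<noteq> {}" using has_disjoint_paths_def by fastforce
  ultimately have conn: "edge_conn V E ends x y = Max ?K" and max: "Max ?K \<in> ?K"
    unfolding edge_conn_def using cSup_eq_Max Max_in by blast+
  show ?thesis
  proof
    assume "k \<le> edge_conn V E ends x y"
    then show "cuts_at_least E ends x y k"
      using has_disjoint_paths_le_cut[OF fin, of V ends x y "Max ?K"] max conn
      unfolding cuts_at_least_def by fastforce
  next
    assume "cuts_at_least E ends x y k"
    then have "k \<in> ?K" using menger_edge[OF G xy] by simp
    then show "k \<le> edge_conn V E ends x y" using conn finK by simp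
  qed
qed

lemma edge_conn_on_set_iff:
  assumes "pseudograph V E ends" "A \<subseteq> V"
  shows "(\<forall>x\<in>A. \<forall>y\<in>A. x \<noteq> y \<longrightarrow> l \<le> edge_conn V E ends x y)
    \<longleftrightarrow> (\<forall>S. S \<inter> A \<noteq> {} \<longrightarrow> A - S \<noteq> {} \<longrightarrow> l \<le> card (cut_edges E ends S))"
proof -
  have "(\<forall>x\<in>A. \<forall>y\<in>A. x \<noteq> y \<longrightarrow> l \<le> edge_conn V E ends x y)
      \<longleftrightarrow> (\<forall>x\<in>A. \<forall>y\<in>A. x \<noteq> y \<longrightarrow> cuts_at_least E ends x y l)"
    using edge_conn_ge_iff[OF assms(1)] assms(2) by blast
  also have "\<dots> \<longleftrightarrow> (\<forall>S. S \<inter> A \<noteq> {} \<longrightarrow> A - S \<noteq> {} \<longrightarrow> l \<le> card (cut_edges E ends S))"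
  proof
    assume H: "\<forall>x\<in>A. \<forall>y\<in>A. x \<noteq> y \<longrightarrow> cuts_at_least E ends x y l"
    show "\<forall>S. S \<inter> A \<noteq> {} \<longrightarrow> A - S \<noteq> {} \<longrightarrow> l \<le> card (cut_edges E ends S)"
    proof (intro allI impI)
      fix S assume "S \<inter> A \<noteq> {}" "A - S \<noteq> {}"
      then obtain x y where "x \<in> A" "x \<in> S" "y \<in> A" "y \<notin> S" by blast
      then show "l \<le> card (cut_edges E ends S)"
        using H unfolding cuts_at_least_def by (metis (full_types))
    qed
  qed (auto simp: cuts_at_least_def)
  finally show ?thesis .
qed

lemma incident_edge_ends:
  assumes "multigraph V E ends" "e \<in> incident_edges E ends s"
  shows "e \<in> E" "ends e = {s, other_end ends s e}" "other_end ends s e \<noteq> s"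
proof -
  show "e \<in> E" using assms(2) unfolding incident_edges_def by simp
  then have "card (ends e) = 2" using assms(1) unfolding multigraph_def by blast
  then obtain a b where "ends e = {a, b}" "a \<noteq> b" by (meson card_2_iff)
  moreover have "s \<in> ends e" using assms(2) unfolding incident_edges_def by simp
  ultimately obtain w where w: "ends e = {s, w}" "w \<noteq> s"
    by (metis insert_commute insertE singletonD)
  moreover have "other_end ends s e = w"
    unfolding other_end_def by (rule the_equality) (use w in \<open>auto simp: doubleton_eq_iff\<close>)
  ultimately show "ends e = {s, other_end ends s e}" "other_end ends s e \<noteq> s" by simp_all
qed

lemma cut_edges_insert_vertex:
  assumes G: "multigraph V E ends" and "s \<notin> S"
  shows "card (cut_edges E ends (insert s S))
      + 2 * card {e\<in>incident_edges E ends s. other_end ends s e \<in> S}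
    = card (cut_edges E ends S) + card (incident_edges E ends s)"
proof -
  let ?t = "other_end ends s"
  have "of_bool (crosses (insert s S) (ends e)) + 2 * of_bool (s \<in> ends e \<and> ?t e \<in> S)
      = of_bool (crosses S (ends e)) + (of_bool (s \<in> ends e) :: nat)" if "e \<in> E" for e
  proof (cases "s \<in> ends e")
    case True
    then have "e \<in> incident_edges E ends s" using that unfolding incident_edges_def by simp
    then have "ends e = {s, ?t e}" "?t e \<noteq> s" using incident_edge_ends[OF G] by simp_all
    then show ?thesis using \<open>s \<notin> S\<close> by auto
  next
    case False
    then show ?thesis unfolding crosses_def by auto
  qed
  then have "(\<Sum>e\<in>E. of_bool (crosses (insert s S) (ends e)) + 2 * of_bool (s \<in> ends e \<and> ?t e \<in> S))
      = (\<Sum>e\<in>E. of_bool (crosses S (ends e)) + (of_bool (s \<in> ends e) :: nat))"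
    by (rule sum.cong[OF refl])
  moreover have "finite E" using G unfolding multigraph_def by simp
  ultimately show ?thesis
    unfolding cut_edges_def incident_edges_def
    by (simp only: card_filter_sum mem_Collect_eq conj_assoc sum.distrib sum_distrib_left)
qed

lemma lift_edges_eq:
  "lift_edges E ends s i j = (E', ends') \<Longrightarrow>
    E' = E - {j} \<and> ends' = ends(i := {other_end ends s i, other_end ends s j})"
  unfolding lift_edges_def by auto

lemma pseudograph_lift_edges:
  assumes G: "multigraph V E ends" and ij: "i \<in> incident_edges E ends s" "j \<in> incident_edges E ends s"
    and lift: "lift_edges E ends s i j = (E', ends')"
  shows "pseudograph V E' ends'"
proof -
  have "ends i \<subseteq> V" "ends j \<subseteq> V"
    using G incident_edge_ends(1)[OF G] ij unfolding multigraph_def by auto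
  then have "{other_end ends s i, other_end ends s j} \<subseteq> V"
    using incident_edge_ends(2)[OF G] ij by auto
  moreover have "card {other_end ends s i, other_end ends s j} \<le> 2"
    by (simp add: card_insert_if)
  ultimately show ?thesis
    using G lift_edges_eq[OF lift] unfolding pseudograph_def multigraph_def by auto
qed

lemma cut_edges_lift_edges:
  assumes G: "multigraph V E ends" and ij: "i \<in> incident_edges E ends s" "j \<in> incident_edges E ends s"
    "i \<noteq> j" and lift: "lift_edges E ends s i j = (E', ends')" and "s \<notin> S"
  shows "card (cut_edges E' ends' S) + 2 * of_bool (other_end ends s i \<in> S \<and> other_end ends s j \<in> S)
    = card (cut_edges E ends S)"
proof -
  let ?t = "other_end ends s" and ?c = "\<lambda>T. of_bool (crosses S T) :: nat"
  have E': "E' = E - {j}" and ends': "ends' = ends(i := {?t i, ?t j})"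
    using lift_edges_eq[OF lift] by simp_all
  have i: "i \<in> E" "ends i = {s, ?t i}" and j: "j \<in> E" "ends j = {s, ?t j}"
    using incident_edge_ends[OF G] ij by auto
  have fin: "finite E" using G unfolding multigraph_def by simp
  have split: "(\<Sum>e\<in>E - {j}. f e) = f i + (\<Sum>e\<in>E - {j} - {i}. f e)" for f :: "_ \<Rightarrow> nat"
    by (rule sum.remove) (use fin i(1) ij(3) in auto)
  have "card (cut_edges E ends S) = ?c (ends j) + (\<Sum>e\<in>E - {j}. ?c (ends e))"
    unfolding cut_edges_def card_filter_sum[OF fin] by (rule sum.remove[OF fin j(1)])
  also have "\<dots> = ?c (ends j) + (?c (ends i) + (\<Sum>e\<in>E - {j} - {i}. ?c (ends e)))"
    by (simp only: split)
  finally have "card (cut_edges E ends S)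
      = ?c (ends j) + (?c (ends i) + (\<Sum>e\<in>E - {j} - {i}. ?c (ends e)))" .
  moreover have "card (cut_edges E' ends' S) = ?c {?t i, ?t j} + (\<Sum>e\<in>E - {j} - {i}. ?c (ends e))"
  proof -
    have "card (cut_edges E' ends' S) = ?c (ends' i) + (\<Sum>e\<in>E - {j} - {i}. ?c (ends' e))"
      unfolding E' cut_edges_def card_filter_sum[OF finite_Diff[OF fin]] by (rule split)
    also have "(\<Sum>e\<in>E - {j} - {i}. ?c (ends' e)) = (\<Sum>e\<in>E - {j} - {i}. ?c (ends e))"
      by (rule sum.cong) (auto simp: ends')
    finally show ?thesis by (simp only: ends' fun_upd_same)
  qed
  moreover have "?c {s, ?t i} + ?c {s, ?t j} = ?c {?t i, ?t j} + 2 * of_bool (?t i \<in> S \<and> ?t j \<in> S)"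
    using \<open>s \<notin> S\<close> by auto
  ultimately show ?thesis using i(2) j(2) by simp
qed

lemma admissible_iff_lifted_cuts:
  assumes G: "multigraph V E ends" and ij: "i \<in> incident_edges E ends s" "j \<in> incident_edges E ends s"
    "i \<noteq> j" and lift: "lift_edges E ends s i j = (E', ends')" and A: "A \<subseteq> V - {s}"
  shows "admissible V E ends s A l i j
    \<longleftrightarrow> (\<forall>S. S \<inter> A \<noteq> {} \<longrightarrow> A - S \<noteq> {} \<longrightarrow> l \<le> card (cut_edges E' ends' S))"
proof -
  have "admissible V E ends s A l i j
      \<longleftrightarrow> (\<forall>x\<in>V - {s}. \<forall>y\<in>V - {s}. x \<noteq> y \<longrightarrow> tau A l x y \<le> edge_conn V E' ends' x y)"
    unfolding admissible_def lift using ij by simp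
  also have "\<dots> \<longleftrightarrow> (\<forall>x\<in>A. \<forall>y\<in>A. x \<noteq> y \<longrightarrow> l \<le> edge_conn V E' ends' x y)"
    using A unfolding tau_def by (auto simp: subset_iff)
  also have "\<dots> \<longleftrightarrow> (\<forall>S. S \<inter> A \<noteq> {} \<longrightarrow> A - S \<noteq> {} \<longrightarrow> l \<le> card (cut_edges E' ends' S))"
    using A by (intro edge_conn_on_set_iff pseudograph_lift_edges[OF G ij(1,2) lift]) blast
  finally show ?thesis .
qed

locale degree_four_lifting =
  fixes V :: "'v set" and E :: "'e set" and ends :: "'e \<Rightarrow> 'v set"
    and s :: 'v and A :: "'v set" and l :: nat
  assumes multigraph: "multigraph V E ends"
    and A_subset: "A \<subseteq> V" and s_notin_A: "s \<notin> A"
    and A_connected: "\<forall>x\<in>A. \<forall>y\<in>A. x \<noteq> y \<longrightarrow> l \<le> edge_conn V E ends x y"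
    and edges_meet_A: "\<forall>e\<in>E. ends e \<inter> A \<noteq> {}"
    and degree_four: "card (incident_edges E ends s) = 4"
    and l_ge_2: "2 \<le> l"
begin

abbreviation "d S \<equiv> card (cut_edges E ends S)"
abbreviation "t \<equiv> other_end ends s"

text \<open>The paper asks for \<open>X \<subseteq> V - s\<close>; only \<open>s \<notin> X\<close> matters, as \<open>d\<close> ignores vertices outside \<open>V\<close>.\<close>

definition dangerous :: "'v set \<Rightarrow> bool" where
  "dangerous X \<longleftrightarrow> s \<notin> X \<and> X \<inter> A \<noteq> {} \<and> A - X \<noteq> {} \<and> d X \<le> l + 1"

definition blocked :: "'e \<Rightarrow> 'e \<Rightarrow> bool" where
  "blocked i j \<longleftrightarrow> (\<exists>X. dangerous X \<and> t i \<in> X \<and> t j \<in> X)"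

lemma blocked_sym: "blocked i j \<longleftrightarrow> blocked j i"
  unfolding blocked_def by blast

lemma pseudograph: "pseudograph V E ends"
  using multigraph by (rule multigraph_imp_pseudograph)

lemma d_complement: "d (V - S) = d S"
proof -
  have "\<forall>e\<in>E. ends e \<subseteq> V" using multigraph unfolding multigraph_def by simp
  then show ?thesis by (simp add: cut_edges_complement)
qed

lemma l_le_d: "S \<inter> A \<noteq> {} \<Longrightarrow> A - S \<noteq> {} \<Longrightarrow> l \<le> d S"
  using A_connected edge_conn_on_set_iff[OF pseudograph A_subset] by simp

lemma incident_other_end:
  assumes "e \<in> incident_edges E ends s"
  shows "e \<in> E" "ends e = {s, t e}" "t e \<in> A" "t e \<in> V"
proof -
  show "e \<in> E" "ends e = {s, t e}" using incident_edge_ends[OF multigraph assms] by simp_all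
  then show "t e \<in> A" using edges_meet_A s_notin_A by auto
  then show "t e \<in> V" using A_subset by blast
qed

lemma d_insert_s:
  "s \<notin> S \<Longrightarrow> d (insert s S) + 2 * card {e\<in>incident_edges E ends s. t e \<in> S} = d S + 4"
  using cut_edges_insert_vertex[OF multigraph] degree_four by simp

lemma dangerous_misses_third:
  assumes X: "dangerous X" "t i \<in> X" "t j \<in> X"
    and ijk: "i \<in> incident_edges E ends s" "j \<in> incident_edges E ends s"
      "k \<in> incident_edges E ends s" "distinct [i, j, k]"
  shows "t k \<notin> X"
proof
  assume "t k \<in> X"
  then have "{i, j, k} \<subseteq> {e\<in>incident_edges E ends s. t e \<in> X}" using X ijk by auto
  moreover have "finite (incident_edges E ends s)" using degree_four card.infinite by fastforce
  ultimately have "3 \<le> card {e\<in>incident_edges E ends s. t e \<in> X}"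
    using card_mono[of "{e\<in>incident_edges E ends s. t e \<in> X}" "{i, j, k}"] ijk(4) by simp
  moreover have "l \<le> d (insert s X)" using X(1) s_notin_A unfolding dangerous_def by (intro l_le_d) auto
  ultimately show False using d_insert_s X(1) unfolding dangerous_def by fastforce
qed

lemma admissible_iff_not_blocked:
  assumes ij: "i \<in> incident_edges E ends s" "j \<in> incident_edges E ends s" "i \<noteq> j"
  shows "admissible V E ends s A l i j \<longleftrightarrow> \<not> blocked i j"
proof -
  obtain E' ends' where lift: "lift_edges E ends s i j = (E', ends')" by fastforce
  let ?d' = "\<lambda>S. card (cut_edges E' ends' S)"
  have A: "A \<subseteq> V - {s}" using A_subset s_notin_A by blast
  have lifted: "?d' S + 2 * of_bool (t i \<in> S \<and> t j \<in> S) = d S" if "s \<notin> S" for S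
    using cut_edges_lift_edges[OF multigraph ij lift that] .
  have "\<forall>e\<in>E'. ends' e \<subseteq> V"
    using pseudograph_lift_edges[OF multigraph ij(1,2) lift] unfolding pseudograph_def by simp
  then have compl: "?d' (V - S) = ?d' S" for S
    by (simp add: cut_edges_complement)
  show ?thesis
    unfolding admissible_iff_lifted_cuts[OF multigraph ij lift A]
  proof
    assume cuts: "\<forall>S. S \<inter> A \<noteq> {} \<longrightarrow> A - S \<noteq> {} \<longrightarrow> l \<le> ?d' S"
    show "\<not> blocked i j"
    proof
      assume "blocked i j"
      then obtain X where X: "dangerous X" "t i \<in> X" "t j \<in> X" unfolding blocked_def by blast
      then have "?d' X + 2 = d X" using lifted[of X] unfolding dangerous_def by simp
      moreover have "l \<le> ?d' X" using cuts X(1) unfolding dangerous_def by simp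
      ultimately show False using X(1) unfolding dangerous_def by linarith
    qed
  next
    assume not_blocked: "\<not> blocked i j"
    show "\<forall>S. S \<inter> A \<noteq> {} \<longrightarrow> A - S \<noteq> {} \<longrightarrow> l \<le> ?d' S"
    proof (intro allI impI)
      fix S assume S: "S \<inter> A \<noteq> {}" "A - S \<noteq> {}"
      define S' where "S' = (if s \<in> S then V - S else S)"
      have S': "s \<notin> S'" "S' \<inter> A \<noteq> {}" "A - S' \<noteq> {}" "?d' S' = ?d' S"
        using S A_subset compl unfolding S'_def by auto
      have "l \<le> d S'" using l_le_d S'(2,3) by simp
      moreover have "\<not> (t i \<in> S' \<and> t j \<in> S' \<and> d S' \<le> l + 1)"
        using not_blocked S' unfolding blocked_def dangerous_def by blast
      ultimately show "l \<le> ?d' S"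
        using lifted[OF S'(1)] S'(4) by (cases "t i \<in> S' \<and> t j \<in> S'") auto
    qed
  qed
qed

lemma blocked_complement:
  assumes inc: "incident_edges E ends s = {i, j, k, m}" "distinct [i, j, k, m]"
    and "blocked i j"
  shows "blocked k m"
proof -
  have mem: "i \<in> incident_edges E ends s" "j \<in> incident_edges E ends s"
    "k \<in> incident_edges E ends s" "m \<in> incident_edges E ends s" using inc(1) by auto
  obtain X where X: "dangerous X" "t i \<in> X" "t j \<in> X" using assms(3) unfolding blocked_def by blast
  have "t k \<notin> X" "t m \<notin> X" using dangerous_misses_third[OF X] mem inc(2) by auto
  then have "{e\<in>incident_edges E ends s. t e \<in> X} = {i, j}" using inc(1) X by auto
  moreover have "s \<notin> X" using X(1) unfolding dangerous_def by simp
  ultimately have "d (insert s X) = d X" using d_insert_s[of X] inc(2) by simp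
  moreover have "d (V - insert s X) = d (insert s X)" by (rule d_complement)
  moreover have "t k \<in> V - insert s X" "t m \<in> V - insert s X" "t i \<notin> V - insert s X"
    using incident_other_end(3,4)[OF mem(3)] incident_other_end(3,4)[OF mem(4)]
      \<open>t k \<notin> X\<close> \<open>t m \<notin> X\<close> X(2) s_notin_A by auto
  moreover have "(V - insert s X) \<inter> A \<noteq> {}" "A - (V - insert s X) \<noteq> {}"
    using \<open>t k \<in> V - insert s X\<close> \<open>t i \<notin> V - insert s X\<close>
      incident_other_end(3)[OF mem(1)] incident_other_end(3)[OF mem(3)] by blast+
  ultimately have "dangerous (V - insert s X)"
    using X(1) unfolding dangerous_def by simp
  then show ?thesis
    using \<open>t k \<in> V - insert s X\<close> \<open>t m \<in> V - insert s X\<close> unfolding blocked_def by blast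
qed

lemma incident_edge_between:
  assumes "i \<in> incident_edges E ends s" "t i \<in> P" "s \<in> Q"
  shows "1 \<le> card (edges_between E ends P Q)"
proof -
  have "i \<in> edges_between E ends P Q"
    using incident_other_end(1,2)[OF assms(1)] assms(2,3) unfolding edges_between_def by auto
  moreover have "finite (edges_between E ends P Q)"
    using pseudograph unfolding pseudograph_def edges_between_def by simp
  ultimately show ?thesis by (simp add: Suc_le_eq card_gt_0_iff) blast
qed

lemma blocked_two_imp_odd:
  assumes inc: "incident_edges E ends s = {i, j, k, m}" "distinct [i, j, k, m]"
    and "blocked i j" "blocked i k"
  shows "odd l"
proof -
  have mem: "i \<in> incident_edges E ends s" "j \<in> incident_edges E ends s"
    "k \<in> incident_edges E ends s" "m \<in> incident_edges E ends s" using inc(1) by auto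
  note inA = mem[THEN incident_other_end(3)]
  obtain X where X: "dangerous X" "t i \<in> X" "t j \<in> X" using assms(3) unfolding blocked_def by blast
  obtain Y where Y: "dangerous Y" "t i \<in> Y" "t k \<in> Y" using assms(4) unfolding blocked_def by blast
  have out: "t k \<notin> X" "t m \<notin> X" "t j \<notin> Y" "t m \<notin> Y"
    using dangerous_misses_third[OF X] dangerous_misses_third[OF Y] mem inc(2) by auto
  have sXY: "s \<notin> X \<union> Y" using X(1) Y(1) unfolding dangerous_def by simp
  have XY: "d X \<le> l + 1" "d Y \<le> l + 1" using X(1) Y(1) unfolding dangerous_def by simp_all
  have parts: "l \<le> d (X - Y)" "l \<le> d (Y - X)" "l \<le> d (X \<inter> Y)"
    using X(2,3) Y(2,3) out inA by (auto intro!: l_le_d)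
  have "{e\<in>incident_edges E ends s. t e \<in> X \<union> Y} = {i, j, k}" using inc(1) X Y out by auto
  then have "d (insert s (X \<union> Y)) + 2 = d (X \<union> Y)"
    using d_insert_s[OF sXY] inc(2) by simp
  moreover have "l \<le> d (insert s (X \<union> Y))"
    using X(2) inA(1,4) out s_notin_A by (intro l_le_d) auto
  moreover have "1 \<le> card (edges_between E ends (X \<inter> Y) (- (X \<union> Y)))"
    using incident_edge_between[OF mem(1)] X(2) Y(2) sXY by simp
  moreover note cut_edges_posimodular[OF pseudograph, of X Y] cut_edges_submodular[OF pseudograph, of X Y]
  ultimately have "d X = l + 1" "d (X \<inter> Y) = l" "d (X - Y) = l" using parts XY by linarith+
  moreover have "d (X \<inter> Y) + d (X - Y) = d X + 2 * card (edges_between E ends (X \<inter> Y) (X - Y))"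
  proof -
    have "X \<inter> Y \<inter> (X - Y) = {}" "X \<inter> Y \<union> (X - Y) = X" by blast+
    then show ?thesis using cut_edges_disjoint_Un[OF pseudograph, of "X \<inter> Y" "X - Y"] by simp
  qed
  ultimately show "odd l" by presburger
qed

lemma not_blocked_three:
  assumes inc: "incident_edges E ends s = {i, j, k, m}" "distinct [i, j, k, m]"
  shows "\<not> (blocked i j \<and> blocked i k \<and> blocked i m)"
proof
  assume "blocked i j \<and> blocked i k \<and> blocked i m"
  then obtain X Y Z where X: "dangerous X" "t i \<in> X" "t j \<in> X"
    and Y: "dangerous Y" "t i \<in> Y" "t k \<in> Y" and Z: "dangerous Z" "t i \<in> Z" "t m \<in> Z"
    unfolding blocked_def by blast
  have mem: "i \<in> incident_edges E ends s" "j \<in> incident_edges E ends s"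
    "k \<in> incident_edges E ends s" "m \<in> incident_edges E ends s" using inc(1) by auto
  note inA = mem[THEN incident_other_end(3)]
  have out: "t k \<notin> X" "t m \<notin> X" "t j \<notin> Y" "t m \<notin> Y" "t j \<notin> Z" "t k \<notin> Z"
    using dangerous_misses_third[OF X] dangerous_misses_third[OF Y] dangerous_misses_third[OF Z]
      mem inc(2) by auto
  have "l \<le> d (X \<inter> Y \<inter> Z)" "l \<le> d (X - Y - Z)" "l \<le> d (Y - X - Z)" "l \<le> d (Z - X - Y)"
    using X Y Z out inA by (auto intro!: l_le_d)
  moreover have "s \<notin> X \<union> Y \<union> Z" using X(1) Y(1) Z(1) unfolding dangerous_def by simp
  then have "1 \<le> card (edges_between E ends (X \<inter> Y \<inter> Z) (- (X \<union> Y \<union> Z)))"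
    using incident_edge_between[OF mem(1)] X(2) Y(2) Z(2) by simp
  moreover note cut_edges_three_sets[OF pseudograph, of X Y Z]
  ultimately show False using X(1) Y(1) Z(1) l_ge_2 unfolding dangerous_def by linarith
qed

end

lemma card_eq_4E:
  assumes "card S = 4"
  obtains a b c d where "S = {a, b, c, d}" "distinct [a, b, c, d]"
proof -
  have "card S = Suc 3" using assms by simp
  then obtain a T where T: "S = insert a T" "a \<notin> T" "card T = 3" unfolding card_Suc_eq by blast
  then obtain b c d where "T = {b, c, d}" "b \<noteq> c" "c \<noteq> d" "b \<noteq> d" unfolding card_3_iff by blast
  then show thesis using that[of a b c d] T by auto
qed

lemma four_vertex_graph_cases:
  assumes D: "D = {a, b, c, d}" "distinct [a, b, c, d]"
    and R: "\<And>u v. u \<in> D \<Longrightarrow> v \<in> D \<Longrightarrow> u \<noteq> v \<Longrightarrow> R u v \<longleftrightarrow> \<not> B u v"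
    and sym: "\<And>u v. B u v \<longleftrightarrow> B v u"
    and opposite: "B a b \<longleftrightarrow> B c d" "B a c \<longleftrightarrow> B b d" "B a d \<longleftrightarrow> B b c"
    and not_all: "\<not> (B a b \<and> B a c \<and> B a d)"
  shows "is_K4 D R \<or> is_K22 D R \<or> is_2K2 D R"
proof -
  have RB: "R a b \<longleftrightarrow> \<not> B a b" "R b a \<longleftrightarrow> \<not> B a b" "R c d \<longleftrightarrow> \<not> B a b" "R d c \<longleftrightarrow> \<not> B a b"
    "R a c \<longleftrightarrow> \<not> B a c" "R c a \<longleftrightarrow> \<not> B a c" "R b d \<longleftrightarrow> \<not> B a c" "R d b \<longleftrightarrow> \<not> B a c"
    "R a d \<longleftrightarrow> \<not> B a d" "R d a \<longleftrightarrow> \<not> B a d" "R b c \<longleftrightarrow> \<not> B a d" "R c b \<longleftrightarrow> \<not> B a d"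
    using R[of a b] R[of b a] R[of c d] R[of d c] R[of a c] R[of c a] R[of b d] R[of d b]
      R[of a d] R[of d a] R[of b c] R[of c b] sym[of a b] sym[of a c] sym[of a d]
      sym[of c d] sym[of b d] sym[of b c] opposite D by auto
  consider "\<not> B a b" "\<not> B a c" "\<not> B a d" | "B a b" "\<not> B a c" "\<not> B a d"
    | "\<not> B a b" "B a c" "\<not> B a d" | "\<not> B a b" "\<not> B a c" "B a d"
    | "B a b" "B a c" "\<not> B a d" | "B a b" "\<not> B a c" "B a d" | "\<not> B a b" "B a c" "B a d"
    using not_all by blast
  then show ?thesis
  proof cases
    case 1
    then have "is_K4 D R" unfolding is_K4_def using D RB by auto
    then show ?thesis by blast
  next
    case 2
    have "is_K22 D R" unfolding is_K22_def
      by (rule exI[of _ a], rule exI[of _ b], rule exI[of _ c], rule exI[of _ d]) (use D RB 2 in \<open>auto simp: doubleton_eq_iff\<close>)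
    then show ?thesis by blast
  next
    case 3
    have "is_K22 D R" unfolding is_K22_def
      by (rule exI[of _ a], rule exI[of _ c], rule exI[of _ b], rule exI[of _ d]) (use D RB 3 in \<open>auto simp: doubleton_eq_iff\<close>)
    then show ?thesis by blast
  next
    case 4
    have "is_K22 D R" unfolding is_K22_def
      by (rule exI[of _ a], rule exI[of _ d], rule exI[of _ b], rule exI[of _ c]) (use D RB 4 in \<open>auto simp: doubleton_eq_iff\<close>)
    then show ?thesis by blast
  next
    case 5
    have "is_2K2 D R" unfolding is_2K2_def
      by (rule exI[of _ a], rule exI[of _ d], rule exI[of _ b], rule exI[of _ c]) (use D RB 5 in \<open>auto simp: doubleton_eq_iff\<close>)
    then show ?thesis by blast
  next
    case 6
    have "is_2K2 D R" unfolding is_2K2_def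
      by (rule exI[of _ a], rule exI[of _ c], rule exI[of _ b], rule exI[of _ d]) (use D RB 6 in \<open>auto simp: doubleton_eq_iff\<close>)
    then show ?thesis by blast
  next
    case 7
    have "is_2K2 D R" unfolding is_2K2_def
      by (rule exI[of _ a], rule exI[of _ b], rule exI[of _ c], rule exI[of _ d]) (use D RB 7 in \<open>auto simp: doubleton_eq_iff\<close>)
    then show ?thesis by blast
  qed
qed

lemma is_2K2_non_adjacent:
  assumes "is_2K2 D R"
  obtains a b c d where "D = {a, b, c, d}" "distinct [a, b, c, d]" "\<not> R a b" "\<not> R a c"
proof -
  obtain p q r w where pqrw: "distinct [p, q, r, w]" "D = {p, q, r, w}"
    and R: "\<forall>u\<in>D. \<forall>v\<in>D. u \<noteq> v \<longrightarrow> (R u v \<longleftrightarrow> {u, v} = {p, q} \<or> {u, v} = {r, w})"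
    using assms unfolding is_2K2_def by blast
  have "\<not> R p r" "\<not> R p w" using R pqrw by (auto simp: doubleton_eq_iff)
  moreover have "D = {p, r, w, q}" "distinct [p, r, w, q]" using pqrw by auto
  ultimately show thesis using that by blast
qed

context degree_four_lifting
begin

theorem lifting_graph_cases:
  "(is_K4 (incident_edges E ends s) (admissible V E ends s A l)
      \<or> is_K22 (incident_edges E ends s) (admissible V E ends s A l)
      \<or> is_2K2 (incident_edges E ends s) (admissible V E ends s A l))
    \<and> (is_2K2 (incident_edges E ends s) (admissible V E ends s A l) \<longrightarrow> odd l)"
proof
  obtain a b c d where inc: "incident_edges E ends s = {a, b, c, d}" "distinct [a, b, c, d]"
    using card_eq_4E[OF degree_four] by blast
  have "blocked c d \<longleftrightarrow> blocked a b" "blocked b d \<longleftrightarrow> blocked a c" "blocked b c \<longleftrightarrow> blocked a d"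
    using blocked_complement[of a b c d] blocked_complement[of c d a b] blocked_complement[of a c b d]
      blocked_complement[of b d a c] blocked_complement[of a d b c] blocked_complement[of b c a d]
      inc by (auto simp: insert_commute)
  then show "is_K4 (incident_edges E ends s) (admissible V E ends s A l)
      \<or> is_K22 (incident_edges E ends s) (admissible V E ends s A l)
      \<or> is_2K2 (incident_edges E ends s) (admissible V E ends s A l)"
    using four_vertex_graph_cases[OF inc, of "admissible V E ends s A l" blocked]
      admissible_iff_not_blocked blocked_sym not_blocked_three[OF inc] by blast
next
  show "is_2K2 (incident_edges E ends s) (admissible V E ends s A l) \<longrightarrow> odd l"
  proof
    assume "is_2K2 (incident_edges E ends s) (admissible V E ends s A l)"
    then obtain a b c d where inc: "incident_edges E ends s = {a, b, c, d}" "distinct [a, b, c, d]"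
      and "\<not> admissible V E ends s A l a b" "\<not> admissible V E ends s A l a c"
      by (rule is_2K2_non_adjacent)
    then have "blocked a b" "blocked a c" using admissible_iff_not_blocked inc by auto
    then show "odd l" using blocked_two_imp_odd[OF inc] by blast
  qed
qed

end

theorem proposition4p4:
  fixes V :: "'v set" and E :: "'e set" and ends :: "'e \<Rightarrow> 'v set"
    and l :: nat and s :: 'v and A :: "'v set"
  assumes "multigraph V E ends"
    and "l \<ge> 4"
    and "s \<in> V"
    and "A \<subset> V" and "s \<notin> A"
    and "\<forall>x\<in>A. \<forall>y\<in>A. x \<noteq> y \<longrightarrow> edge_conn V E ends x y \<ge> l"
    and "\<forall>e\<in>E. ends e \<inter> A \<noteq> {}"
    and "card (incident_edges E ends s) = 4"
  shows "(is_K4 (incident_edges E ends s) (admissible V E ends s A l)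
          \<or> is_K22 (incident_edges E ends s) (admissible V E ends s A l)
          \<or> is_2K2 (incident_edges E ends s) (admissible V E ends s A l))
       \<and> (is_2K2 (incident_edges E ends s) (admissible V E ends s A l) \<longrightarrow> odd l)"
proof -
  have "degree_four_lifting V E ends s A l"
    by unfold_locales (use assms in auto)
  then show ?thesis by (rule degree_four_lifting.lifting_graph_cases)
qed

end
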